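(* The function $f(x)=\sum_{n\geq 0}\frac{1}{(n+1)^2}\sum_{i=0}^{2^n-1}\sigma_{n,i}(x)$ on $[0,1]$ is completely non-Hölder.
   Context: The Faber–Schauder functions: $\sigma_{0,0}(x)=0$ for $x\le 0$ or $x\ge 1$, $\sigma_{0,0}(x)=2x$ for $0\le x\le \frac12$, $\sigma_{0,0}(x)=2-2x$ for $\frac12\le x\le 1$; and for $n\ge 0$, $0\le i\le 2^n-1$, $\sigma_{n,i}(x)=\sigma_{0,0}(2^nx-i)$. For $\alpha>0$, a function $g:[0,1]\to\mathbb{R}$ is called $\alpha$-Hölder at $x_0$ from the right if $\limsup_{y\searrow x_0}\frac{|g(y)-g(x_0)|}{|y-x_0|^\alpha}<\infty$, and $\alpha$-Hölder at $x_0$ from the left if $\limsup_{y\nearrow x_0}\frac{|g(y)-g(x_0)|}{|y-x_0|^\alpha}<\infty$. The function $g$ is called completely non-Hölder if there is no $x_0\in[0,1]$ and no $\alpha>0$ such that $g$ is $\alpha$-Hölder at $x_0$ from the left or from the right. *)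

theory Defs
  imports "HOL-Analysis.Analysis"
begin

definition sigma00 :: "real \<Rightarrow> real" where
  "sigma00 x = (if x \<le> 0 \<or> x \<ge> 1 then 0 else if x \<le> 1/2 then 2 * x else 2 - 2 * x)"

definition schauder :: "nat \<Rightarrow> nat \<Rightarrow> real \<Rightarrow> real" where
  "schauder n i x = sigma00 (2 ^ n * x - real i)"

definition fS :: "real \<Rightarrow> real" where
  "fS x = (\<Sum>n. (1 / (real n + 1)^2) * (\<Sum>i<2^n. schauder n i x))"

definition holder_right :: "(real \<Rightarrow> real) \<Rightarrow> real \<Rightarrow> real \<Rightarrow> bool" where
  "holder_right g alpha x0 \<longleftrightarrow> x0 \<in> {0..<1} \<and>
     Limsup (at x0 within {x0<..1}) (\<lambda>y. ereal (\<bar>g y - g x0\<bar> / \<bar>y - x0\<bar> powr alpha)) < \<infinity>"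

definition holder_left :: "(real \<Rightarrow> real) \<Rightarrow> real \<Rightarrow> real \<Rightarrow> bool" where
  "holder_left g alpha x0 \<longleftrightarrow> x0 \<in> {0<..1} \<and>
     Limsup (at x0 within {0..<x0}) (\<lambda>y. ereal (\<bar>g y - g x0\<bar> / \<bar>y - x0\<bar> powr alpha)) < \<infinity>"

definition completely_non_holder :: "(real \<Rightarrow> real) \<Rightarrow> bool" where
  "completely_non_holder g \<longleftrightarrow>
     \<not> (\<exists>x0\<in>{0..1}. \<exists>alpha>0. holder_left g alpha x0 \<or> holder_right g alpha x0)"

end

(* On a dyadic cell [j/2^m, (j+1)/2^m] every layer of f of level n < m is affine, the layer of
   level m is a tent with peak 1 at the midpoint, and all layers of level n > m vanish at the
   endpoints and the midpoint. Hence the second difference of f over the cell is 1/(m+1)^2, so one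
   of the three points is at distance at least 1/(2(m+1)^2) in value from f(x0). Every one-sided
   neighbourhood of x0 of length 2^(1-m) contains such a cell, and 1/(m+1)^2 decays more slowly
   than any power 2^(-m alpha). *)

theory Submission
  imports Defs "HOL-Real_Asymp.Real_Asymp"
begin

lemma sigma00_eq_0: "t \<le> 0 \<or> 1 \<le> t \<Longrightarrow> sigma00 t = 0"
  by (auto simp: sigma00_def)

lemma sigma00_left: "0 \<le> t \<Longrightarrow> t \<le> 1/2 \<Longrightarrow> sigma00 t = 2 * t"
  by (auto simp: sigma00_def)

lemma sigma00_right: "1/2 \<le> t \<Longrightarrow> t \<le> 1 \<Longrightarrow> sigma00 t = 2 - 2 * t"
  by (auto simp: sigma00_def)

lemma sigma00_Ints:
  assumes "t \<in> \<int>"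
  shows "sigma00 t = 0"
proof -
  obtain z where "t = of_int z" using assms by (elim Ints_cases)
  moreover have "z \<le> 0 \<or> 1 \<le> z" by linarith
  ultimately show ?thesis by (intro sigma00_eq_0) auto
qed

lemma sigma00_half_integer: "sigma00 (of_int z + 1/2) = (if z = 0 then 1 else 0)"
proof -
  have "z = 0 \<or> z \<le> -1 \<or> 1 \<le> z" by linarith
  then show ?thesis
    by (elim disjE) (auto simp: sigma00_left intro!: sigma00_eq_0)
qed

lemma sigma00_midpoint:
  assumes "of_int k / 2 \<le> s" "s \<le> (of_int k + 1) / 2"
    and "of_int k / 2 \<le> t" "t \<le> (of_int k + 1) / 2"
  shows "sigma00 ((s + t) / 2) = (sigma00 s + sigma00 t) / 2"
proof -
  consider "k \<le> -1" | "k = 0" | "k = 1" | "2 \<le> k" by linarith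
  then show ?thesis
  proof cases
    case 1
    then have "real_of_int k \<le> -1" by simp
    with assms show ?thesis by (subst (1 2 3) sigma00_eq_0) auto
  next
    case 2
    with assms show ?thesis by (subst (1 2 3) sigma00_left) auto
  next
    case 3
    with assms show ?thesis by (subst (1 2 3) sigma00_right) (auto simp: field_simps)
  next
    case 4
    then have "2 \<le> real_of_int k" by simp
    with assms show ?thesis by (subst (1 2 3) sigma00_eq_0) auto
  qed
qed

lemma schauder_eq_0_if_Ints: "2 ^ n * x \<in> \<int> \<Longrightarrow> schauder n i x = 0"
  unfolding schauder_def by (intro sigma00_Ints Ints_diff) auto

lemma dyadic_Ints_mono:
  assumes "2 ^ M * x \<in> \<int>" "M \<le> n"
  shows "2 ^ n * (x :: real) \<in> \<int>"
proof -
  have "2 ^ n * x = 2 ^ (n - M) * (2 ^ M * x)"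
    using assms(2) by (simp add: mult.assoc[symmetric] power_add[symmetric])
  with assms(1) show ?thesis by (metis Ints_mult Ints_numeral Ints_power)
qed

definition schauder_level :: "nat \<Rightarrow> real \<Rightarrow> real" where
  "schauder_level n x = (\<Sum>i<2^n. schauder n i x)"

lemma fS_dyadic:
  assumes "2 ^ M * x \<in> \<int>"
  shows "fS x = (\<Sum>n<M. 1 / (real n + 1)^2 * schauder_level n x)"
  unfolding fS_def schauder_level_def
  by (rule suminf_finite) (auto intro!: sum.neutral schauder_eq_0_if_Ints dyadic_Ints_mono[OF assms])

lemma schauder_midpoint:
  assumes "n < m"
  shows "schauder n i ((real j + 1/2) / 2^m) = (schauder n i (real j / 2^m) + schauder n i ((real j + 1) / 2^m)) / 2"
proof -
  \<comment> \<open>The rescaled points are q/(2e), (q+1)/(2e) and their midpoint; all lie in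
    the half-integer interval [k/2, (k+1)/2] on which sigma00 is affine.\<close>
  define e :: int where "e = 2 ^ (m - n - 1)"
  define q :: int where "q = int j - int i * 2 * e"
  define k where "k = q div e"
  define s where "s = of_int q / (2 * real_of_int e)"
  define t where "t = (of_int q + 1) / (2 * real_of_int e)"
  have e: "0 < e" by (simp add: e_def)
  have "e * k + q mod e = q" unfolding k_def by (rule mult_div_mod_eq)
  then have "k * e \<le> q" "q + 1 \<le> (k + 1) * e"
    using pos_mod_bound[OF e, of q] pos_mod_sign[OF e, of q] by (simp_all add: algebra_simps)
  then have "real_of_int k * of_int e \<le> of_int q" "of_int q + 1 \<le> (real_of_int k + 1) * of_int e"
    by (metis of_int_le_iff of_int_mult, metis of_int_1 of_int_add of_int_le_iff of_int_mult)
  then have "real_of_int k / 2 \<le> s" "t \<le> (real_of_int k + 1) / 2" "s \<le> t"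
    using e by (simp_all add: s_def t_def field_simps)
  then have mid: "sigma00 ((s + t) / 2) = (sigma00 s + sigma00 t) / 2"
    by (intro sigma00_midpoint[of k]) linarith+
  have pw: "(2::real) ^ m = 2 ^ n * (2 * of_int e)"
    using assms by (simp add: e_def power_add[symmetric] power_Suc[symmetric] del: power_Suc)
  have "2 ^ n * (real j / 2^m) - real i = s"
    "2 ^ n * ((real j + 1) / 2^m) - real i = t"
    "2 ^ n * ((real j + 1/2) / 2^m) - real i = (s + t) / 2"
    using e unfolding pw q_def s_def t_def by (simp_all add: field_simps)
  then show ?thesis
    unfolding schauder_def by (simp only: mid)
qed

lemma schauder_level_midpoint:
  "n < m \<Longrightarrow> schauder_level n ((real j + 1/2) / 2^m)
     = (schauder_level n (real j / 2^m) + schauder_level n ((real j + 1) / 2^m)) / 2"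
  unfolding schauder_level_def by (simp only: schauder_midpoint sum_divide_distrib[symmetric] sum.distrib)

lemma schauder_level_eq_0_if_Ints: "2 ^ m * x \<in> \<int> \<Longrightarrow> schauder_level m x = 0"
  unfolding schauder_level_def by (simp add: schauder_eq_0_if_Ints)

lemma schauder_level_peak:
  assumes "j < 2^m"
  shows "schauder_level m ((real j + 1/2) / 2^m) = 1"
proof -
  have "schauder m i ((real j + 1/2) / 2^m) = (if i = j then 1 else 0)" for i
  proof -
    have "2 ^ m * ((real j + 1/2) / 2^m) - real i = of_int (int j - int i) + 1/2" by simp
    then show ?thesis unfolding schauder_def by (simp only: sigma00_half_integer) auto
  qed
  then show ?thesis using assms by (simp add: schauder_level_def)
qed

lemma fS_second_difference:
  assumes "j < 2^m"
  shows "fS ((real j + 1/2) / 2^m) - (fS (real j / 2^m) + fS ((real j + 1) / 2^m)) / 2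
    = 1 / (real m + 1)^2"
proof -
  define w :: "nat \<Rightarrow> real" where "w n = 1 / (real n + 1)^2" for n
  define a where "a = real j / 2^m"
  define b where "b = (real j + 1) / 2^m"
  define c where "c = (real j + 1/2) / 2^m"
  have ints: "2 ^ Suc m * a \<in> \<int>" "2 ^ Suc m * c \<in> \<int>" "2 ^ Suc m * b \<in> \<int>"
    "2 ^ m * a \<in> \<int>" "2 ^ m * b \<in> \<int>"
  proof -
    have "2 ^ Suc m * a = of_nat (2 * j)" "2 ^ Suc m * c = of_nat (2 * j + 1)"
      "2 ^ Suc m * b = of_nat (2 * j + 2)" "2 ^ m * a = of_nat j" "2 ^ m * b = of_nat (j + 1)"
      by (simp_all add: a_def b_def c_def field_simps)
    then show "2 ^ Suc m * a \<in> \<int>" "2 ^ Suc m * c \<in> \<int>" "2 ^ Suc m * b \<in> \<int>"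
      "2 ^ m * a \<in> \<int>" "2 ^ m * b \<in> \<int>" by (simp_all only: Ints_of_nat)
  qed
  let ?defect = "\<lambda>n. schauder_level n c - (schauder_level n a + schauder_level n b) / 2"
  have "fS c - (fS a + fS b) / 2 = (\<Sum>n<Suc m. w n * ?defect n)"
    unfolding fS_dyadic[OF ints(1)] fS_dyadic[OF ints(2)] fS_dyadic[OF ints(3)] w_def[symmetric]
    by (simp add: sum_subtractf sum.distrib right_diff_distrib distrib_left
        flip: sum_divide_distrib del: sum.lessThan_Suc)
  also have "\<dots> = w m * ?defect m"
    by (simp add: a_def b_def c_def schauder_level_midpoint)
  also have "\<dots> = w m"
    using assms by (simp add: c_def schauder_level_peak schauder_level_eq_0_if_Ints ints)
  finally show ?thesis by (simp add: a_def b_def c_def w_def)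
qed

lemma second_difference_far_point:
  fixes g :: "real \<Rightarrow> real"
  assumes "g c - (g a + g b) / 2 = d"
  shows "\<exists>y\<in>{a, b, c}. d / 2 \<le> \<bar>g y - g x\<bar>"
proof (rule ccontr)
  assume "\<not> ?thesis"
  then have "\<bar>g a - g x\<bar> < d / 2" "\<bar>g b - g x\<bar> < d / 2" "\<bar>g c - g x\<bar> < d / 2" by auto
  with assms show False by argo
qed

lemma dyadic_cell_in_interval:
  assumes "0 \<le> u" "u + 2 / 2^m \<le> 1"
  obtains j :: nat where "j < 2^m" "u \<le> real j / 2^m" "(real j + 1) / 2^m \<le> u + 2 / 2^m"
proof
  define j where "j = nat \<lceil>u * 2^m\<rceil>"
  have "real j = of_int \<lceil>u * 2^m\<rceil>"
    unfolding j_def using assms(1) by simp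
  then have j: "u * 2^m \<le> real j" "real j + 1 < u * 2^m + 2"
    using ceiling_correct[of "u * 2^m"] by linarith+
  moreover have "u * 2^m + 2 \<le> 2^m"
    using assms(2) by (simp add: field_simps)
  ultimately have "real j < 2^m" by linarith
  then show "j < 2^m"
    by (metis of_nat_less_iff of_nat_numeral of_nat_power)
  show "u \<le> real j / 2^m"
    using j by (simp add: field_simps)
  have "(real j + 1) / 2^m \<le> (u * 2^m + 2) / 2^m"
    using j by (intro divide_right_mono) auto
  then show "(real j + 1) / 2^m \<le> u + 2 / 2^m"
    by (simp add: add_divide_distrib)
qed

lemma fS_oscillation_in_interval:
  assumes "0 \<le> u" "u + 2 / 2^m \<le> 1"
  shows "\<exists>y\<in>{u..u + 2 / 2^m}. 1 / (2 * (real m + 1)^2) \<le> \<bar>fS y - fS x\<bar>"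
proof -
  obtain j where j: "j < 2^m" "u \<le> real j / 2^m" "(real j + 1) / 2^m \<le> u + 2 / 2^m"
    using dyadic_cell_in_interval[OF assms] .
  have "real j / 2^m \<le> (real j + 1/2) / 2^m" "(real j + 1/2) / 2^m \<le> (real j + 1) / 2^m"
    by (simp_all add: divide_right_mono)
  with j have "{real j / 2^m, (real j + 1) / 2^m, (real j + 1/2) / 2^m} \<subseteq> {u..u + 2 / 2^m}"
    by auto
  moreover obtain y where "y \<in> {real j / 2^m, (real j + 1) / 2^m, (real j + 1/2) / 2^m}"
    "1 / (real m + 1)^2 / 2 \<le> \<bar>fS y - fS x\<bar>"
    using second_difference_far_point[of fS, OF fS_second_difference[OF j(1)]] by blast
  ultimately show ?thesis by (intro bexI[of _ y]) auto
qed

lemma fS_oscillates_right: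
  assumes "0 \<le> x" "x < 1"
  shows "\<forall>\<^sub>F m in sequentially. \<exists>y\<in>{x<..1}. \<bar>y - x\<bar> \<le> 2 / 2^m \<and> 1 / (2 * (real m + 1)^2) \<le> \<bar>fS y - fS x\<bar>"
proof -
  have "\<forall>\<^sub>F m in sequentially. 2 / 2^m \<le> 1 - x"
    using assms(2) by real_asymp
  then show ?thesis
  proof eventually_elim
    case (elim m)
    then obtain y where "y \<in> {x..x + 2 / 2^m}" "1 / (2 * (real m + 1)^2) \<le> \<bar>fS y - fS x\<bar>"
      using fS_oscillation_in_interval[OF assms(1), of m x] by auto
    moreover from this(2) have "y \<noteq> x" by (auto simp: add_pos_pos)
    ultimately show ?case using elim by (intro bexI[of _ y]) auto
  qed
qed

lemma fS_oscillates_left: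
  assumes "0 < x" "x \<le> 1"
  shows "\<forall>\<^sub>F m in sequentially. \<exists>y\<in>{0..<x}. \<bar>y - x\<bar> \<le> 2 / 2^m \<and> 1 / (2 * (real m + 1)^2) \<le> \<bar>fS y - fS x\<bar>"
proof -
  have "\<forall>\<^sub>F m in sequentially. 2 / 2^m \<le> x"
    using assms(1) by real_asymp
  then show ?thesis
  proof eventually_elim
    case (elim m)
    then obtain y where "y \<in> {x - 2 / 2^m..x}" "1 / (2 * (real m + 1)^2) \<le> \<bar>fS y - fS x\<bar>"
      using fS_oscillation_in_interval[of "x - 2 / 2^m" m x] assms by auto
    moreover from this(2) have "y \<noteq> x" by (auto simp: add_pos_pos)
    ultimately show ?case using elim by (intro bexI[of _ y]) auto
  qed
qed

lemma holder_quotient_Limsup_infinite: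
  fixes g :: "real \<Rightarrow> real"
  assumes "0 < \<alpha>" "x0 \<notin> S"
    and osc: "\<forall>\<^sub>F m in sequentially. \<exists>y\<in>S. \<bar>y - x0\<bar> \<le> 2 / 2^m \<and> 1 / (2 * (real m + 1)^2) \<le> \<bar>g y - g x0\<bar>"
  shows "Limsup (at x0 within S) (\<lambda>y. ereal (\<bar>g y - g x0\<bar> / \<bar>y - x0\<bar> powr \<alpha>)) = \<infinity>"
proof (rule ccontr)
  define Q where "Q y = \<bar>g y - g x0\<bar> / \<bar>y - x0\<bar> powr \<alpha>" for y
  define bound where "bound m = 1 / (2 * (real m + 1)^2) / (2 / 2^m) powr \<alpha>" for m :: nat
  assume "Limsup (at x0 within S) (\<lambda>y. ereal (\<bar>g y - g x0\<bar> / \<bar>y - x0\<bar> powr \<alpha>)) \<noteq> \<infinity>"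
  then obtain n :: nat where "Limsup (at x0 within S) (\<lambda>y. ereal (Q y)) < ereal (real n)"
    using less_PInf_Ex_of_nat by (auto simp: Q_def top.not_eq_extremum)
  then have near: "\<forall>\<^sub>F y in at x0 within S. Q y < real n"
    by (auto dest: Limsup_lessD)
  define y where "y m = (SOME y. y \<in> S \<and> \<bar>y - x0\<bar> \<le> 2 / 2^m \<and> 1 / (2 * (real m + 1)^2) \<le> \<bar>g y - g x0\<bar>)" for m
  have y: "\<forall>\<^sub>F m in sequentially. y m \<in> S \<and> \<bar>y m - x0\<bar> \<le> 2 / 2^m \<and> 1 / (2 * (real m + 1)^2) \<le> \<bar>g (y m) - g x0\<bar>"
    using osc unfolding y_def by eventually_elim (rule someI_ex, blast)
  have "(y \<longlongrightarrow> x0) sequentially"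
  proof (rule metric_tendsto_imp_tendsto)
    show "((\<lambda>m. 2 / 2^m :: real) \<longlongrightarrow> 0) sequentially" by real_asymp
    show "\<forall>\<^sub>F m in sequentially. dist (y m) x0 \<le> dist (2 / 2^m :: real) 0"
      using y by eventually_elim (simp add: dist_real_def)
  qed
  moreover have "\<forall>\<^sub>F m in sequentially. y m \<in> S - {x0}"
    using y by eventually_elim (use assms(2) in auto)
  ultimately have "filterlim y (at x0 within S) sequentially"
    by (auto simp: filterlim_at)
  then have "\<forall>\<^sub>F m in sequentially. Q (y m) < real n"
    using near by (rule eventually_compose_filterlim[rotated])
  moreover have "\<forall>\<^sub>F m in sequentially. real n \<le> bound m"
    using assms(1) unfolding bound_def filterlim_at_top[symmetric] by real_asymp
  moreover have "\<forall>\<^sub>F m in sequentially. bound m \<le> Q (y m)"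
    using y
  proof eventually_elim
    case (elim m)
    then have "y m \<noteq> x0" using assms(2) by auto
    then have "0 < \<bar>y m - x0\<bar> powr \<alpha>" by simp
    moreover have "\<bar>y m - x0\<bar> powr \<alpha> \<le> (2 / 2^m) powr \<alpha>"
      using elim assms(1) by (intro powr_mono2) auto
    ultimately show ?case
      unfolding bound_def Q_def using elim by (intro frac_le) auto
  qed
  ultimately have "\<forall>\<^sub>F m in sequentially. False"
    by eventually_elim linarith
  then show False by simp
qed

theorem mainTheorem4:
  shows "completely_non_holder fS"
proof -
  have "\<not> holder_left fS \<alpha> x0" "\<not> holder_right fS \<alpha> x0" if "0 < \<alpha>" for \<alpha> x0
    using holder_quotient_Limsup_infinite[OF that _ fS_oscillates_left]
      holder_quotient_Limsup_infinite[OF that _ fS_oscillates_right]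
    unfolding holder_left_def holder_right_def by auto
  then show ?thesis
    unfolding completely_non_holder_def by blast
qed

end
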